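(* Let $G$ be a group with a finite generating set $S$ (with $S=S^{-1}$ and $e\notin S$). Suppose $\kappa(a)=0$ for all $a\in S$. Then $G$ is virtually abelian.
   Context: For a group $G$ with finite generating set $S$ ($S=S^{-1}$, $e\notin S$), $|x|$ denotes the word length of $x\in G$ with respect to $S$. For $g\in G$ define $\mathrm{Av}(g)=\frac{1}{|S|}\sum_{a\in S}|a^{-1}ga|$, and for $g\neq e$ define the curvature $\kappa(g)=\frac{|g|-\mathrm{Av}(g)}{|g|}$. *)

theory Defs
  imports "HOL-Algebra.Algebra" "HOL-Algebra.Generated_Groups"
begin

definition word_length :: "('a, 'b) monoid_scheme \<Rightarrow> 'a set \<Rightarrow> 'a \<Rightarrow> nat" where
  "word_length G S x =
     (LEAST n. \<exists>ws. set ws \<subseteq> S \<and> length ws = n \<and> foldr (\<otimes>\<^bsub>G\<^esub>) ws \<one>\<^bsub>G\<^esub> = x)"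

definition Av :: "('a, 'b) monoid_scheme \<Rightarrow> 'a set \<Rightarrow> 'a \<Rightarrow> real" where
  "Av G S g = (\<Sum>a\<in>S. real (word_length G S (inv\<^bsub>G\<^esub> a \<otimes>\<^bsub>G\<^esub> g \<otimes>\<^bsub>G\<^esub> a))) / real (card S)"

definition curvature :: "('a, 'b) monoid_scheme \<Rightarrow> 'a set \<Rightarrow> 'a \<Rightarrow> real" where
  "curvature G S g = (real (word_length G S g) - Av G S g) / real (word_length G S g)"

definition virtually_abelian :: "('a, 'b) monoid_scheme \<Rightarrow> bool" where
  "virtually_abelian G \<longleftrightarrow>
     (\<exists>H. subgroup H G \<and> comm_group (G\<lparr>carrier := H\<rparr>) \<and> finite (rcosets\<^bsub>G\<^esub> H))"

end

theory Submission
  imports Defs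
begin

text \<open>If every generator a has curvature 0, then all conjugates of a by generators, which
  are nontrivial words of length at most 3, must have length exactly 1 on average and hence
  each of them has length 1, i.e. lies in S. So S is a finite set invariant under conjugation
  by S, hence by the whole group. The action of G on S by conjugation then has finite image,
  and its kernel is the centraliser of S, which is the centre of G because S generates G.
  Thus the centre is an abelian subgroup of finite index.\<close>

lemma (in monoid) word_length_le:
  assumes "set ws \<subseteq> S" "foldr (\<otimes>) ws \<one> = x"
  shows "word_length G S x \<le> length ws"
  unfolding word_length_def by (rule Least_le) (use assms in blast)

lemma (in monoid) word_length_witness:
  assumes "set ws \<subseteq> S" "foldr (\<otimes>) ws \<one> = x"
  obtains vs where "set vs \<subseteq> S" "length vs = word_length G S x" "foldr (\<otimes>) vs \<one> = x"
proof -
  have "\<exists>vs. set vs \<subseteq> S \<and> length vs = word_length G S x \<and> foldr (\<otimes>) vs \<one> = x"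
    unfolding word_length_def by (rule LeastI_ex) (use assms in blast)
  then show ?thesis using that by blast
qed

lemma (in monoid) word_length_pos:
  assumes "set ws \<subseteq> S" "foldr (\<otimes>) ws \<one> = x" "x \<noteq> \<one>"
  shows "word_length G S x \<ge> 1"
proof -
  obtain vs where "length vs = word_length G S x" "foldr (\<otimes>) vs \<one> = x"
    using word_length_witness[OF assms(1,2)] .
  with assms(3) show ?thesis by (cases vs) auto
qed

lemma (in monoid) word_length_eq_1_imp_mem:
  assumes "S \<subseteq> carrier G" "set ws \<subseteq> S" "foldr (\<otimes>) ws \<one> = x" "word_length G S x = 1"
  shows "x \<in> S"
proof -
  obtain vs where "set vs \<subseteq> S" "length vs = 1" "foldr (\<otimes>) vs \<one> = x"
    using word_length_witness[OF assms(2,3)] assms(4) by metis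
  moreover from \<open>length vs = 1\<close> obtain c where "vs = [c]" by (cases vs) auto
  ultimately show ?thesis using assms(1) by auto
qed

lemma (in monoid) word_length_generator:
  assumes "S \<subseteq> carrier G" "a \<in> S" "a \<noteq> \<one>"
  shows "word_length G S a = 1"
proof -
  have word: "set [a] \<subseteq> S" "foldr (\<otimes>) [a] \<one> = a" using assms by auto
  show ?thesis using word_length_le[OF word] word_length_pos[OF word assms(3)] by simp
qed

lemma (in group) conj_generator_mem_if_curvature_zero:
  assumes "finite S" "S \<subseteq> carrier G" "\<And>c. c \<in> S \<Longrightarrow> inv c \<in> S" "\<one> \<notin> S"
    and "a \<in> S" "curvature G S a = 0" "b \<in> S"
  shows "inv b \<otimes> a \<otimes> b \<in> S"
proof -
  define t where "t c = word_length G S (inv c \<otimes> a \<otimes> c)" for c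
  have a: "a \<in> carrier G" "a \<noteq> \<one>" using assms(2,4,5) by auto
  have word: "set [inv c, a, c] \<subseteq> S" "foldr (\<otimes>) [inv c, a, c] \<one> = inv c \<otimes> a \<otimes> c"
    if "c \<in> S" for c
    using that assms(2,3,5) a by (auto simp: m_assoc)
  have t_pos: "1 \<le> t c" if "c \<in> S" for c
  proof -
    have c: "c \<in> carrier G" using that assms(2) by auto
    have "inv c \<otimes> a \<otimes> c \<noteq> \<one>"
    proof
      assume "inv c \<otimes> a \<otimes> c = \<one>"
      have "c \<otimes> (inv c \<otimes> a \<otimes> c) \<otimes> inv c = c \<otimes> (inv c \<otimes> a)"
        using a c by (simp add: m_assoc)
      also have "\<dots> = a" using a c by (simp add: m_assoc[symmetric])
      finally show False using \<open>inv c \<otimes> a \<otimes> c = \<one>\<close> a c by simp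
    qed
    then show ?thesis unfolding t_def using word_length_pos[OF word[OF that]] by blast
  qed
  have "Av G S a = 1"
    using assms(6) word_length_generator[OF assms(2,5) a(2)] by (simp add: curvature_def)
  moreover have "card S > 0" using assms(1,5) card_gt_0_iff by blast
  ultimately have "real (\<Sum>c\<in>S. t c) = real (card S)"
    unfolding Av_def t_def by (simp add: field_simps)
  then have "(\<Sum>c\<in>S. t c) = card S" by (rule of_nat_eq_iff[THEN iffD1])
  then have "(\<Sum>c\<in>S. 1) = (\<Sum>c\<in>S. t c)" by simp
  from sum_mono_inv[OF this t_pos assms(7,1)] have "t b = 1" by simp
  then show ?thesis
    using word_length_eq_1_imp_mem[OF assms(2) word[OF assms(7)]] unfolding t_def by blast
qed

definition centralizer :: "('a, 'b) monoid_scheme \<Rightarrow> 'a set \<Rightarrow> 'a set" where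
  "centralizer G A = {g \<in> carrier G. \<forall>a\<in>A. g \<otimes>\<^bsub>G\<^esub> a = a \<otimes>\<^bsub>G\<^esub> g}"

abbreviation center :: "('a, 'b) monoid_scheme \<Rightarrow> 'a set" where
  "center G \<equiv> centralizer G (carrier G)"

lemma centralizerI:
  "g \<in> carrier G \<Longrightarrow> (\<And>a. a \<in> A \<Longrightarrow> g \<otimes>\<^bsub>G\<^esub> a = a \<otimes>\<^bsub>G\<^esub> g) \<Longrightarrow> g \<in> centralizer G A"
  unfolding centralizer_def by blast

lemma centralizerD:
  assumes "g \<in> centralizer G A"
  shows "g \<in> carrier G" "a \<in> A \<Longrightarrow> g \<otimes>\<^bsub>G\<^esub> a = a \<otimes>\<^bsub>G\<^esub> g"
  using assms unfolding centralizer_def by blast+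

lemma (in group) inv_commute:
  assumes "g \<in> carrier G" "a \<in> carrier G" "g \<otimes> a = a \<otimes> g"
  shows "inv g \<otimes> a = a \<otimes> inv g"
proof -
  have "inv g \<otimes> a = inv g \<otimes> (a \<otimes> g) \<otimes> inv g" using assms(1,2) by (simp add: m_assoc)
  also have "\<dots> = inv g \<otimes> (g \<otimes> a) \<otimes> inv g" using assms(3) by simp
  also have "\<dots> = a \<otimes> inv g" using assms(1,2) by (simp add: m_assoc[symmetric])
  finally show ?thesis .
qed

lemma (in group) mult_commute:
  assumes "g \<in> carrier G" "h \<in> carrier G" "a \<in> carrier G"
    and "g \<otimes> a = a \<otimes> g" "h \<otimes> a = a \<otimes> h"
  shows "g \<otimes> h \<otimes> a = a \<otimes> (g \<otimes> h)"
proof -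
  have "g \<otimes> h \<otimes> a = g \<otimes> (a \<otimes> h)" using assms(1-3,5) by (simp add: m_assoc)
  also have "\<dots> = a \<otimes> (g \<otimes> h)" using assms(1-4) by (simp add: m_assoc[symmetric])
  finally show ?thesis .
qed

lemma (in group) subgroup_centralizer:
  assumes "A \<subseteq> carrier G"
  shows "subgroup (centralizer G A) G"
proof (rule subgroupI)
  show "centralizer G A \<subseteq> carrier G" by (auto simp: centralizer_def)
  have "\<one> \<in> centralizer G A" using assms by (auto intro!: centralizerI)
  then show "centralizer G A \<noteq> {}" by blast
next
  fix g h assume g: "g \<in> centralizer G A" and h: "h \<in> centralizer G A"
  note gh = centralizerD[OF g] centralizerD[OF h]
  show "inv g \<in> centralizer G A"
    using inv_commute[OF gh(1) _ gh(2)] assms gh(1) by (auto intro!: centralizerI)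
  show "g \<otimes> h \<in> centralizer G A"
    using mult_commute[OF gh(1,3) _ gh(2,4)] assms gh(1,3) by (auto intro!: centralizerI)
qed

lemma (in group) comm_group_center: "comm_group (G\<lparr>carrier := center G\<rparr>)"
proof -
  interpret Z: group "G\<lparr>carrier := center G\<rparr>"
    using subgroup_imp_group[OF subgroup_centralizer] by blast
  show ?thesis
  proof (rule Z.group_comm_groupI)
    fix x y assume "x \<in> carrier (G\<lparr>carrier := center G\<rparr>)" "y \<in> carrier (G\<lparr>carrier := center G\<rparr>)"
    then have x: "x \<in> center G" and y: "y \<in> center G" by simp_all
    have "x \<otimes> y = y \<otimes> x" by (rule centralizerD(2)[OF x centralizerD(1)[OF y]])
    then show "x \<otimes>\<^bsub>G\<lparr>carrier := center G\<rparr>\<^esub> y = y \<otimes>\<^bsub>G\<lparr>carrier := center G\<rparr>\<^esub> x" by simp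
  qed
qed

lemma (in group) centralizer_generate:
  assumes "S \<subseteq> carrier G"
  shows "centralizer G (generate G S) = centralizer G S"
proof
  show "centralizer G (generate G S) \<subseteq> centralizer G S"
  proof
    fix g assume g: "g \<in> centralizer G (generate G S)"
    show "g \<in> centralizer G S"
      by (rule centralizerI[OF centralizerD(1)[OF g]]) (rule centralizerD(2)[OF g generate.incl])
  qed
next
  show "centralizer G S \<subseteq> centralizer G (generate G S)"
  proof
    fix g assume g: "g \<in> centralizer G S"
    have "S \<subseteq> centralizer G {g}"
      using assms centralizerD(2)[OF g] by (auto intro!: centralizerI)
    then have gen: "generate G S \<subseteq> centralizer G {g}"
      using generate_subgroup_incl subgroup_centralizer centralizerD(1)[OF g] by simp
    show "g \<in> centralizer G (generate G S)"
    proof (rule centralizerI[OF centralizerD(1)[OF g]])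
      fix x assume "x \<in> generate G S"
      then have "x \<otimes> g = g \<otimes> x" using centralizerD(2)[OF subsetD[OF gen]] by simp
      then show "g \<otimes> x = x \<otimes> g" by simp
    qed
  qed
qed

lemma (in group) conj_mem_of_generate:
  assumes "S \<subseteq> carrier G" "\<And>c. c \<in> S \<Longrightarrow> inv c \<in> S"
    and "\<And>a c. a \<in> S \<Longrightarrow> c \<in> S \<Longrightarrow> inv c \<otimes> a \<otimes> c \<in> S"
    and "g \<in> generate G S" "a \<in> S"
  shows "inv g \<otimes> a \<otimes> g \<in> S"
  using assms(4,5)
proof (induction g arbitrary: a)
  case one
  then show ?case using assms(1) by auto
next
  case (incl c)
  show ?case by (rule assms(3)[OF incl(2,1)])
next
  case (inv c)
  then show ?case using assms(3)[OF inv(2) assms(2)] by simp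
next
  case (eng h k)
  have "h \<in> carrier G" "k \<in> carrier G" "a \<in> carrier G"
    using generate_in_carrier[OF assms(1)] eng.hyps eng.prems assms(1) by auto
  then have "inv (h \<otimes> k) \<otimes> a \<otimes> (h \<otimes> k) = inv k \<otimes> (inv h \<otimes> a \<otimes> h) \<otimes> k"
    by (simp add: inv_mult_group m_assoc)
  then show ?case using eng.IH eng.prems by simp
qed

lemma (in group) finite_rcosets_of_fibres:
  assumes "finite (f ` carrier G)"
    and "\<And>g h. g \<in> carrier G \<Longrightarrow> h \<in> carrier G \<Longrightarrow> f g = f h \<Longrightarrow> g \<otimes> inv h \<in> H"
    and "subgroup H G"
  shows "finite (rcosets H)"
proof -
  define rep where "rep y = inv_into (carrier G) f y" for y
  have "rcosets H \<subseteq> (\<lambda>y. H #> rep y) ` f ` carrier G"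
  proof
    fix C assume "C \<in> rcosets H"
    then obtain g where g: "g \<in> carrier G" and C: "C = H #> g" unfolding RCOSETS_def by auto
    have rep: "rep (f g) \<in> carrier G" "f (rep (f g)) = f g"
      using g unfolding rep_def by (auto intro: inv_into_into f_inv_into_f)
    then have "g \<in> H #> rep (f g)"
      using assms(2)[OF g rep(1)] subgroup.rcos_module[OF assms(3) is_group] g by simp
    then have "C = H #> rep (f g)" using repr_independence[OF _ rep(1) assms(3)] C by simp
    then show "C \<in> (\<lambda>y. H #> rep y) ` f ` carrier G" using g by blast
  qed
  then show ?thesis using assms(1) finite_subset by blast
qed

lemma (in group) finite_rcosets_center:
  assumes "finite S" "S \<subseteq> carrier G" "generate G S = carrier G"
    and "\<And>g a. g \<in> carrier G \<Longrightarrow> a \<in> S \<Longrightarrow> inv g \<otimes> a \<otimes> g \<in> S"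
  shows "finite (rcosets (center G))"
proof (rule finite_rcosets_of_fibres)
  define f where "f g = restrict (\<lambda>a. inv g \<otimes> a \<otimes> g) S" for g
  have "f ` carrier G \<subseteq> S \<rightarrow>\<^sub>E S" using assms(4) unfolding f_def by auto
  then show "finite (f ` carrier G)" using assms(1) by (simp add: finite_PiE finite_subset)
  show "subgroup (center G) G" by (rule subgroup_centralizer) simp
  fix g h assume g: "g \<in> carrier G" and h: "h \<in> carrier G" and "f g = f h"
  have "g \<otimes> inv h \<otimes> a = a \<otimes> (g \<otimes> inv h)" if "a \<in> S" for a
  proof -
    have a: "a \<in> carrier G" using that assms(2) by auto
    have conj: "inv h \<otimes> a \<otimes> h = inv g \<otimes> a \<otimes> g"
      using fun_cong[OF \<open>f g = f h\<close>, of a] that unfolding f_def by simp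
    have "g \<otimes> inv h \<otimes> a = g \<otimes> (inv h \<otimes> a \<otimes> h) \<otimes> inv h" using g h a by (simp add: m_assoc)
    also have "\<dots> = g \<otimes> (inv g \<otimes> a \<otimes> g) \<otimes> inv h" using conj by simp
    also have "\<dots> = a \<otimes> (g \<otimes> inv h)" using g h a by (simp add: m_assoc[symmetric])
    finally show ?thesis .
  qed
  then have "g \<otimes> inv h \<in> centralizer G S" using g h by (auto intro!: centralizerI)
  then show "g \<otimes> inv h \<in> center G" using centralizer_generate[OF assms(2)] assms(3) by simp
qed

theorem mainTheorem1:
  fixes G :: "('a, 'b) monoid_scheme" and S :: "'a set"
  assumes "group G"
    and "finite S"
    and "S \<subseteq> carrier G"
    and "generate G S = carrier G"
    and "\<forall>a\<in>S. inv\<^bsub>G\<^esub> a \<in> S"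
    and "\<one>\<^bsub>G\<^esub> \<notin> S"
    and "\<forall>a\<in>S. curvature G S a = 0"
  shows "virtually_abelian G"
proof -
  interpret group G by fact
  have conj_generator: "inv\<^bsub>G\<^esub> c \<otimes>\<^bsub>G\<^esub> a \<otimes>\<^bsub>G\<^esub> c \<in> S" if "a \<in> S" "c \<in> S" for a c
    using assms(5,7) that by (intro conj_generator_mem_if_curvature_zero[OF assms(2,3) _ assms(6)]) auto
  have "inv\<^bsub>G\<^esub> g \<otimes>\<^bsub>G\<^esub> a \<otimes>\<^bsub>G\<^esub> g \<in> S" if "g \<in> carrier G" "a \<in> S" for g a
    using assms(4,5) that by (intro conj_mem_of_generate[OF assms(3) _ conj_generator]) auto
  then have "finite (rcosets\<^bsub>G\<^esub> (center G))" by (rule finite_rcosets_center[OF assms(2-4)])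
  moreover have "subgroup (center G) G" by (rule subgroup_centralizer) simp
  ultimately show ?thesis unfolding virtually_abelian_def using comm_group_center by blast
qed

end
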